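(* Let $C$ be a linear completely regular $[n,k,2]_q$ code with covering radius $\rho=1$ and $k<n-1$, and let $n_a$ be the number of codewords at distance one from any vector not in $C$. Let $X_1,\dots,X_{n/n_a}$ be a partition of the coordinate set $\{1,\dots,n\}$ into sets of size $n_a$ such that the support of every weight-2 codeword of $C$ is contained in one of the $X_j$. For each $j$, fix a coordinate $i_j\in X_j$, let $I=\{i_1,\dots,i_{n/n_a}\}$, let $D'$ be the set of codewords of $C$ whose support is contained in $I$, and let $D$ be the code obtained from $D'$ by deleting all coordinates outside $I$. Then $n/n_a\ge 3$ and $D$ is a $q$-ary Hamming code of length $n/n_a$.
   Context: $\mathbb{F}_q$ is the finite field with $q$ elements; the support of a vector is its set of nonzero coordinates; Hamming distance; covering radius $\rho=\max_{\bf v}\min_{{\bf x}\in C}d({\bf v},{\bf x})$. $C$ is completely regular if for every vector ${\bf x}$, with $t=d({\bf x},C)$, the number of codewords at distance $i$ from ${\bf x}$ depends only on $t$ and $i$. For $m\ge 2$ a $q$-ary Hamming code of length $(q^m-1)/(q-1)$ is a linear code with an $m\times (q^m-1)/(q-1)$ parity-check matrix whose columns are nonzero and pairwise linearly independent. *)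

theory Defs
  imports Main "HOL-Library.Cardinality"
begin

text \<open>Vectors over a finite field 'a are functions nat => 'a; a word with
coordinate set S is a function vanishing outside S.  The ambient space
F_q^n uses the coordinate set {1..n}.\<close>

definition words :: "nat set \<Rightarrow> (nat \<Rightarrow> 'a::zero) set" where
  "words S = {v. \<forall>i. i \<notin> S \<longrightarrow> v i = 0}"

definition supp :: "(nat \<Rightarrow> 'a::zero) \<Rightarrow> nat set" where
  "supp v = {i. v i \<noteq> 0}"

definition hdist :: "(nat \<Rightarrow> 'a) \<Rightarrow> (nat \<Rightarrow> 'a) \<Rightarrow> nat" where
  "hdist x y = card {i. x i \<noteq> y i}"

definition wt :: "(nat \<Rightarrow> 'a::zero) \<Rightarrow> nat" where
  "wt v = card (supp v)"

definition linear_code :: "nat \<Rightarrow> (nat \<Rightarrow> 'a::field) set \<Rightarrow> bool" where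
  "linear_code n C \<longleftrightarrow> C \<subseteq> words {1..n} \<and> (\<lambda>i. 0) \<in> C \<and>
     (\<forall>x\<in>C. \<forall>y\<in>C. (\<lambda>i. x i + y i) \<in> C) \<and>
     (\<forall>c. \<forall>x\<in>C. (\<lambda>i. c * x i) \<in> C)"

definition min_dist_eq :: "(nat \<Rightarrow> 'a) set \<Rightarrow> nat \<Rightarrow> bool" where
  "min_dist_eq C d \<longleftrightarrow> (\<exists>x\<in>C. \<exists>y\<in>C. x \<noteq> y \<and> hdist x y = d) \<and>
     (\<forall>x\<in>C. \<forall>y\<in>C. x \<noteq> y \<longrightarrow> d \<le> hdist x y)"

definition dist_code :: "(nat \<Rightarrow> 'a) \<Rightarrow> (nat \<Rightarrow> 'a) set \<Rightarrow> nat" where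
  "dist_code x C = Min ((\<lambda>c. hdist x c) ` C)"

definition covering_radius :: "nat \<Rightarrow> (nat \<Rightarrow> 'a::zero) set \<Rightarrow> nat" where
  "covering_radius n C = Max ((\<lambda>v. dist_code v C) ` words {1..n})"

definition completely_regular :: "nat \<Rightarrow> (nat \<Rightarrow> 'a::zero) set \<Rightarrow> bool" where
  "completely_regular n C \<longleftrightarrow>
     (\<forall>x\<in>words {1..n}. \<forall>y\<in>words {1..n}. dist_code x C = dist_code y C \<longrightarrow>
        (\<forall>i. card {c\<in>C. hdist x c = i} = card {c\<in>C. hdist y c = i}))"

definition hamming_code :: "nat set \<Rightarrow> (nat \<Rightarrow> 'a::{finite,field}) set \<Rightarrow> bool" where
  "hamming_code I D \<longleftrightarrow> finite I \<and> (\<exists>r::nat. r \<ge> 2 \<and>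
     card I = (CARD('a) ^ r - 1) div (CARD('a) - 1) \<and>
     (\<exists>H :: nat \<Rightarrow> nat \<Rightarrow> 'a.
        (\<forall>j\<in>I. \<exists>s<r. H s j \<noteq> 0) \<and>
        (\<forall>j\<in>I. \<forall>j'\<in>I. j \<noteq> j' \<longrightarrow>
           (\<forall>a b. (\<forall>s<r. a * H s j + b * H s j' = 0) \<longrightarrow> a = 0 \<and> b = 0)) \<and>
        D = {v \<in> words I. \<forall>s<r. (\<Sum>t\<in>I. H s t * v t) = 0}))"

end

theory Submission
  imports Defs "HOL-Library.FuncSet"
begin

text \<open>
  Write \<open>C\<close> as the kernel of an \<open>r \<times> n\<close> check matrix \<open>H\<close>, \<open>r = n - k \<ge> 2\<close>, whose syndrome map
  is onto.  The codewords at distance one from a word \<open>v \<notin> C\<close> correspond to the pairs \<open>(i, a)\<close>,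
  \<open>a \<noteq> 0\<close>, for which \<open>a\<close> times column \<open>i\<close> of \<open>H\<close> equals the syndrome of \<open>v\<close>.  Every nonzero
  syndrome therefore arises from exactly \<open>n\<^sub>a\<close> such pairs, and counting all pairs gives
  \<open>n (q - 1) = (q\<^sup>r - 1) n\<^sub>a\<close>, i.e. \<open>n / n\<^sub>a = (q\<^sup>r - 1) / (q - 1) \<ge> q + 1 \<ge> 3\<close>.  Minimum distance two
  makes all columns of \<open>H\<close> nonzero, and a dependence between the columns at two representatives
  \<open>i\<^sub>j \<noteq> i\<^sub>l\<close> would give a codeword of weight two meeting two different blocks.  So \<open>D\<close>, the
  kernel of the columns of \<open>H\<close> at \<open>I\<close>, is a Hamming code.  Complete regularity and \<open>\<rho> = 1\<close>
  enter only through the hypothesis that \<open>n\<^sub>a\<close> is the same for all \<open>v \<notin> C\<close>.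
\<close>

lemma card_words:
  assumes "finite J"
  shows "card (words J :: (nat \<Rightarrow> 'a::{finite,zero}) set) = CARD('a) ^ card J"
proof -
  have "bij_betw (\<lambda>f. restrict f J) (words J :: (nat \<Rightarrow> 'a) set) (PiE J (\<lambda>_. UNIV))"
    by (rule bij_betw_byWitness[where f'="\<lambda>g i. if i \<in> J then g i else 0"])
       (auto simp: words_def restrict_def PiE_def extensional_def fun_eq_iff)
  then have "card (words J :: (nat \<Rightarrow> 'a) set) = card (PiE J (\<lambda>_. (UNIV::'a set)))"
    by (rule bij_betw_same_card)
  also have "\<dots> = CARD('a) ^ card J" using assms by (simp add: card_PiE)
  finally show ?thesis .
qed

lemma finite_words: "finite J \<Longrightarrow> finite (words J :: (nat \<Rightarrow> 'a::{finite,zero}) set)"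
  by (rule card_ge_0_finite) (simp add: card_words)

lemma card_words_nonzero:
  assumes "finite J"
  shows "card (words J - {\<lambda>_. 0} :: (nat \<Rightarrow> 'a::{finite,zero}) set) = CARD('a) ^ card J - 1"
proof -
  have "(\<lambda>_. 0::'a) \<in> words J" by (simp add: words_def)
  from card_Diff_singleton[OF this] show ?thesis using assms by (simp add: card_words)
qed

lemma card_field_ge_2: "CARD('a::{finite,field}) \<ge> 2"
proof -
  have "card {0::'a, 1} \<le> CARD('a)" by (rule card_mono) simp_all
  then show ?thesis by simp
qed

lemma hdist_eq_1_iff: "hdist v c = 1 \<longleftrightarrow> (\<exists>i b. b \<noteq> v i \<and> c = v(i := b))"
proof
  assume "hdist v c = 1"
  then obtain i where i: "{x. v x \<noteq> c x} = {i}" unfolding hdist_def by (metis card_1_singletonE)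
  then have "c i \<noteq> v i" by (auto dest: equalityD2)
  moreover have "c = v(i := c i)"
  proof
    fix x
    have "x \<noteq> i \<Longrightarrow> x \<notin> {x. v x \<noteq> c x}" using i by simp
    then show "c x = (v(i := c i)) x" by (cases "x = i") simp_all
  qed
  ultimately show "\<exists>i b. b \<noteq> v i \<and> c = v(i := b)" by blast
next
  assume "\<exists>i b. b \<noteq> v i \<and> c = v(i := b)"
  then obtain i b where "b \<noteq> v i" "c = v(i := b)" by blast
  then have "{x. v x \<noteq> c x} = {i}" by (auto split: if_splits)
  then show "hdist v c = 1" by (simp add: hdist_def)
qed

lemma hdist_zero_right: "hdist c (\<lambda>_. 0) = wt c"
  by (simp add: hdist_def wt_def supp_def)

lemma min_dist_eq_le_wt:
  assumes "min_dist_eq C d" "(\<lambda>_. 0) \<in> C" "c \<in> C" "c \<noteq> (\<lambda>_. 0)"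
  shows "d \<le> wt c"
  using assms hdist_zero_right[of c] unfolding min_dist_eq_def by metis

lemma wt_fun_upd_zero: "a \<noteq> 0 \<Longrightarrow> wt ((\<lambda>_. 0)(i := a)) = 1"
proof -
  assume "a \<noteq> 0"
  then have "supp ((\<lambda>_. 0)(i := a)) = {i}" by (auto simp: supp_def)
  then show ?thesis by (simp add: wt_def)
qed

lemma fun_upd_zero_notin_if_wt_ge_2:
  assumes "\<And>c. c \<in> C \<Longrightarrow> c \<noteq> (\<lambda>_. 0) \<Longrightarrow> 2 \<le> wt c" "a \<noteq> 0"
  shows "(\<lambda>_. 0)(i := a) \<notin> C"
proof
  assume "(\<lambda>_. 0)(i := a) \<in> C"
  moreover have "(\<lambda>_. 0)(i := a) \<noteq> (\<lambda>_. 0)" using assms(2) by (metis fun_upd_same)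
  ultimately have "2 \<le> wt ((\<lambda>_. 0)(i := a))" by (rule assms(1))
  then show False using wt_fun_upd_zero[OF assms(2)] by simp
qed

lemma linear_code_zero: "linear_code n C \<Longrightarrow> (\<lambda>_. 0) \<in> C"
  by (simp add: linear_code_def)

lemma linear_code_subset_words: "linear_code n C \<Longrightarrow> C \<subseteq> words {1..n}"
  by (simp add: linear_code_def)

lemma linear_code_lincomb:
  "linear_code n C \<Longrightarrow> x \<in> C \<Longrightarrow> y \<in> C \<Longrightarrow> (\<lambda>i. x i + a * y i) \<in> C"
  by (simp add: linear_code_def)

lemma linear_code_diff:
  "linear_code n C \<Longrightarrow> x \<in> C \<Longrightarrow> y \<in> C \<Longrightarrow> (\<lambda>i. x i - y i) \<in> C"
  using linear_code_lincomb[of n C x y "-1"] by simp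

lemma linear_code_sum:
  assumes "linear_code n C" "\<And>j. j \<in> S \<Longrightarrow> f j \<in> C"
  shows "(\<lambda>i. \<Sum>j\<in>S. a j * f j i) \<in> C"
  using assms(2)
proof (induction S rule: infinite_finite_induct)
  case (insert j S)
  then have "(\<lambda>i. (\<Sum>j\<in>S. a j * f j i) + a j * f j i) \<in> C"
    using linear_code_lincomb[OF assms(1)] by blast
  then show ?case using insert by (simp add: add.commute)
qed (use linear_code_zero[OF assms(1)] in simp_all)

section \<open>Information sets\<close>

definition information_set :: "(nat \<Rightarrow> 'a::zero) set \<Rightarrow> nat set \<Rightarrow> bool" where
  "information_set C J \<longleftrightarrow> (\<forall>w. \<exists>c\<in>C. \<forall>i\<in>J. c i = w i) \<and>
     (\<forall>c\<in>C. (\<forall>i\<in>J. c i = 0) \<longrightarrow> c = (\<lambda>_. 0))"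

lemma information_set_onto: "information_set C J \<Longrightarrow> \<exists>c\<in>C. \<forall>i\<in>J. c i = w i"
  by (simp add: information_set_def)

lemma information_set_vanishing:
  "information_set C J \<Longrightarrow> c \<in> C \<Longrightarrow> \<forall>i\<in>J. c i = 0 \<Longrightarrow> c = (\<lambda>_. 0)"
  by (simp add: information_set_def)

text \<open>A largest set of coordinates on which the codewords take all values is an information set.\<close>
lemma linear_code_information_set:
  fixes C :: "(nat \<Rightarrow> 'a::field) set"
  assumes lin: "linear_code n C"
  obtains J where "J \<subseteq> {1..n}" "information_set C J"
proof -
  define SS where "SS = {J. J \<subseteq> {1..n} \<and> (\<forall>w. \<exists>c\<in>C. \<forall>i\<in>J. c i = w i)}"
  have fin: "finite SS" unfolding SS_def by (rule finite_subset[of _ "Pow {1..n}"]) auto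
  have "{} \<in> SS" unfolding SS_def using linear_code_zero[OF lin] by auto
  then have "Max (card ` SS) \<in> card ` SS" using fin by (intro Max_in) auto
  then obtain J where J: "J \<in> SS" "card J = Max (card ` SS)" by auto
  have Jmax: "card J' \<le> card J" if "J' \<in> SS" for J' using fin that J(2) by simp
  have J1: "J \<subseteq> {1..n}" and onto: "\<forall>w. \<exists>c\<in>C. \<forall>i\<in>J. c i = w i" using J by (auto simp: SS_def)
  have "c = (\<lambda>_. 0)" if c: "c \<in> C" "\<forall>i\<in>J. c i = 0" for c
  proof (rule ccontr)
    assume "c \<noteq> (\<lambda>_. 0)"
    then obtain t where t: "c t \<noteq> 0" by auto
    have "t \<in> {1..n}" using linear_code_subset_words[OF lin] c(1) t by (auto simp: words_def)
    have "insert t J \<in> SS"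
      unfolding SS_def
    proof (intro CollectI conjI allI)
      show "insert t J \<subseteq> {1..n}" using J1 \<open>t \<in> {1..n}\<close> by auto
    next
      fix w :: "nat \<Rightarrow> 'a"
      obtain c' where c': "c' \<in> C" "\<forall>i\<in>J. c' i = w i" using onto by blast
      let ?c = "\<lambda>i. c' i + ((w t - c' t) / c t) * c i"
      show "\<exists>c\<in>C. \<forall>i\<in>insert t J. c i = w i"
      proof (rule bexI[where x = ?c])
        show "?c \<in> C" by (rule linear_code_lincomb[OF lin c'(1) c(1)])
        have "?c t = w t" using t by simp
        moreover have "?c i = w i" if "i \<in> J" for i using that c(2) c'(2) by simp
        ultimately show "\<forall>i\<in>insert t J. ?c i = w i" by simp
      qed
    qed
    moreover have "t \<notin> J" using c(2) t by auto
    moreover have "finite J" using J1 by (rule finite_subset) simp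
    ultimately show False using Jmax[of "insert t J"] by simp
  qed
  then show thesis using that J1 onto unfolding information_set_def by blast
qed

lemma card_information_set:
  fixes C :: "(nat \<Rightarrow> 'a::{finite,field}) set"
  assumes lin: "linear_code n C" and J: "J \<subseteq> {1..n}" "information_set C J"
  shows "card C = CARD('a) ^ card J"
proof -
  let ?res = "\<lambda>c i. if i \<in> J then c i else 0"
  have "inj_on ?res C"
  proof (rule inj_onI)
    fix c c' assume cc: "c \<in> C" "c' \<in> C" "?res c = ?res c'"
    then have "\<forall>i\<in>J. c i - c' i = 0" by (metis right_minus_eq)
    with linear_code_diff[OF lin cc(1,2)] have "(\<lambda>i. c i - c' i) = (\<lambda>_. 0)"
      by (rule information_set_vanishing[OF J(2)])
    then show "c = c'" by (simp add: fun_eq_iff)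
  qed
  moreover have "?res ` C = words J"
  proof
    show "words J \<subseteq> ?res ` C"
    proof
      fix w :: "nat \<Rightarrow> 'a" assume w: "w \<in> words J"
      obtain c where c: "c \<in> C" "\<forall>i\<in>J. c i = w i" using information_set_onto[OF J(2)] by blast
      have "w = ?res c" using w c(2) by (auto simp: words_def fun_eq_iff)
      then show "w \<in> ?res ` C" using c(1) by blast
    qed
  qed (auto simp: words_def)
  ultimately have "card C = card (words J :: (nat \<Rightarrow> 'a) set)" by (metis card_image)
  also have "\<dots> = CARD('a) ^ card J" using finite_subset[OF J(1)] by (simp add: card_words)
  finally show ?thesis .
qed

lemma information_set_encoder:
  fixes C :: "(nat \<Rightarrow> 'a::field) set"
  assumes lin: "linear_code n C" and J: "finite J" "information_set C J"
  obtains b where "\<And>j. b j \<in> C"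
    and "\<And>v. v \<in> C \<Longrightarrow> v = (\<lambda>i. \<Sum>j\<in>J. v j * b j i)"
    and "\<And>v i. i \<in> J \<Longrightarrow> (\<Sum>j\<in>J. v j * b j i) = v i"
proof -
  have "\<forall>j. \<exists>c\<in>C. \<forall>i\<in>J. c i = (if i = j then 1 else 0)"
    by (intro allI information_set_onto[OF J(2)])
  then obtain b where b: "\<And>j. b j \<in> C" "\<And>j i. i \<in> J \<Longrightarrow> b j i = (if i = j then 1 else 0)"
    by metis
  have agree: "(\<Sum>j\<in>J. v j * b j i) = v i" if "i \<in> J" for v i
  proof -
    have "(\<Sum>j\<in>J. v j * b j i) = (\<Sum>j\<in>J. if j = i then v j else 0)"
      using that by (intro sum.cong) (auto simp: b(2))
    also have "\<dots> = v i" using that J(1) by simp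
    finally show ?thesis .
  qed
  have "v = (\<lambda>i. \<Sum>j\<in>J. v j * b j i)" if v: "v \<in> C" for v
  proof -
    let ?d = "\<lambda>i. v i - (\<Sum>j\<in>J. v j * b j i)"
    have "?d \<in> C" using linear_code_diff[OF lin v linear_code_sum[OF lin b(1)]] .
    moreover have "\<forall>i\<in>J. ?d i = 0" using agree by simp
    ultimately have "?d = (\<lambda>_. 0)" by (rule information_set_vanishing[OF J(2)])
    then show ?thesis by (metis (no_types, lifting) eq_iff_diff_eq_0)
  qed
  then show thesis using that b(1) agree by blast
qed

section \<open>Parity-check matrices\<close>

definition parity_check ::
    "nat \<Rightarrow> nat set \<Rightarrow> (nat \<Rightarrow> nat \<Rightarrow> 'a::comm_ring_1) \<Rightarrow> (nat \<Rightarrow> 'a) set" where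
  "parity_check r S H = {v \<in> words S. \<forall>s<r. (\<Sum>t\<in>S. H s t * v t) = 0}"

definition syndrome ::
    "nat \<Rightarrow> nat set \<Rightarrow> (nat \<Rightarrow> nat \<Rightarrow> 'a::comm_ring_1) \<Rightarrow> (nat \<Rightarrow> 'a) \<Rightarrow> nat \<Rightarrow> 'a" where
  "syndrome r S H v s = (if s < r then \<Sum>t\<in>S. H s t * v t else 0)"

lemma parity_check_iff_syndrome:
  "v \<in> parity_check r S H \<longleftrightarrow> v \<in> words S \<and> syndrome r S H v = (\<lambda>_. 0)"
  unfolding parity_check_def syndrome_def fun_eq_iff by simp

lemma syndrome_in_words: "syndrome r S H v \<in> words {0..<r}"
  by (simp add: syndrome_def words_def)

lemma syndrome_zero: "syndrome r S H (\<lambda>_. 0) = (\<lambda>_. 0)"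
  by (simp add: syndrome_def fun_eq_iff)

lemma syndrome_fun_upd:
  assumes "finite S" "i \<in> S"
  shows "syndrome r S H (v(i := x)) s =
    syndrome r S H v s + (if s < r then H s i * (x - v i) else 0)"
proof -
  have "(\<Sum>t\<in>S. H s t * (v(i := x)) t) = H s i * x + (\<Sum>t\<in>S - {i}. H s t * v t)"
    using assms by (simp add: sum.remove)
  moreover have "(\<Sum>t\<in>S. H s t * v t) = H s i * v i + (\<Sum>t\<in>S - {i}. H s t * v t)"
    using assms by (simp add: sum.remove)
  ultimately show ?thesis by (simp add: syndrome_def algebra_simps)
qed

text \<open>Row \<open>s\<close> compares coordinate \<open>e s \<notin> J\<close> with its value \<open>\<Sum>j\<in>J. v j * b j (e s)\<close> predicted
  by the encoder \<open>b\<close> of the information set \<open>J\<close>.\<close>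
definition systematic_check ::
    "(nat \<Rightarrow> nat) \<Rightarrow> nat set \<Rightarrow> (nat \<Rightarrow> nat \<Rightarrow> 'a::comm_ring_1) \<Rightarrow> nat \<Rightarrow> nat \<Rightarrow> 'a" where
  "systematic_check e J b s t = (if t = e s then 1 else 0) - (if t \<in> J then b t (e s) else 0)"

lemma syndrome_systematic_check:
  assumes "J \<subseteq> {1..n}" "bij_betw e {0..<r} ({1..n} - J)" "s < r"
  shows "syndrome r {1..n} (systematic_check e J b) v s = v (e s) - (\<Sum>j\<in>J. v j * b j (e s))"
proof -
  have "(\<Sum>t\<in>{1..n}. systematic_check e J b s t * v t) =
      (\<Sum>t\<in>{1..n}. if t = e s then v t else 0) - (\<Sum>t\<in>{1..n}. if t \<in> J then b t (e s) * v t else 0)"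
    unfolding systematic_check_def sum_subtractf[symmetric]
    by (intro sum.cong) (auto simp: left_diff_distrib)
  also have "\<dots> = v (e s) - (\<Sum>t\<in>J. b t (e s) * v t)"
    using assms(1) bij_betw_apply[OF assms(2)] assms(3)
    by (simp add: sum.inter_restrict[symmetric] Int_absorb1)
  finally show ?thesis using assms(3) by (simp add: syndrome_def mult.commute)
qed

lemma parity_check_systematic_check:
  fixes C :: "(nat \<Rightarrow> 'a::field) set"
  assumes lin: "linear_code n C" and J: "J \<subseteq> {1..n}"
    and b: "\<And>j. b j \<in> C" "\<And>v. v \<in> C \<Longrightarrow> v = (\<lambda>i. \<Sum>j\<in>J. v j * b j i)"
      "\<And>v i. i \<in> J \<Longrightarrow> (\<Sum>j\<in>J. v j * b j i) = v i"
    and e: "bij_betw e {0..<r} ({1..n} - J)"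
  shows "C = parity_check r {1..n} (systematic_check e J b)"
proof (intro set_eqI)
  fix v :: "nat \<Rightarrow> 'a"
  define E where "E = (\<lambda>i. \<Sum>j\<in>J. v j * b j i)"
  have "E \<in> C" unfolding E_def by (rule linear_code_sum[OF lin b(1)])
  have "v \<in> C \<longleftrightarrow> v \<in> words {1..n} \<and> (\<forall>s<r. v (e s) = E (e s))"
  proof
    assume "v \<in> C"
    moreover from this have "v = E" unfolding E_def by (rule b(2))
    ultimately show "v \<in> words {1..n} \<and> (\<forall>s<r. v (e s) = E (e s))"
      using linear_code_subset_words[OF lin] by auto
  next
    assume v: "v \<in> words {1..n} \<and> (\<forall>s<r. v (e s) = E (e s))"
    have "v i = E i" for i
    proof -
      consider "i \<notin> {1..n}" | "i \<in> J" | "i \<in> e ` {0..<r}"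
        using bij_betw_imp_surj_on[OF e] by blast
      then show ?thesis
      proof cases
        case 1
        moreover have "E \<in> words {1..n}" using \<open>E \<in> C\<close> linear_code_subset_words[OF lin] ..
        ultimately show ?thesis using v by (simp add: words_def)
      next
        case 2
        then show ?thesis by (simp add: E_def b(3))
      next
        case 3
        then show ?thesis using v by auto
      qed
    qed
    then show "v \<in> C" using \<open>E \<in> C\<close> by (metis ext)
  qed
  moreover have "syndrome r {1..n} (systematic_check e J b) v s = v (e s) - E (e s)" if "s < r" for s
    using syndrome_systematic_check[OF J e that] unfolding E_def by simp
  ultimately show "v \<in> C \<longleftrightarrow> v \<in> parity_check r {1..n} (systematic_check e J b)"
    by (simp add: parity_check_def syndrome_def)
qed

lemma syndrome_systematic_check_onto:
  assumes J: "J \<subseteq> {1..n}" and e: "bij_betw e {0..<r} ({1..n} - J)"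
  shows "syndrome r {1..n} (systematic_check e J b) ` words {1..n} = words {0..<r}"
proof
  show "words {0..<r} \<subseteq> syndrome r {1..n} (systematic_check e J b) ` words {1..n}"
  proof
    fix \<sigma> :: "nat \<Rightarrow> 'a" assume \<sigma>: "\<sigma> \<in> words {0..<r}"
    define v where "v i = (if i \<in> {1..n} - J then \<sigma> (the_inv_into {0..<r} e i) else 0)" for i
    have "v \<in> words {1..n}" by (simp add: v_def words_def)
    moreover have "syndrome r {1..n} (systematic_check e J b) v s = \<sigma> s" for s
    proof (cases "s < r")
      case True
      have "the_inv_into {0..<r} e (e s) = s"
        using True bij_betw_imp_inj_on[OF e] by (simp add: the_inv_into_f_f)
      have "syndrome r {1..n} (systematic_check e J b) v s = v (e s) - (\<Sum>j\<in>J. v j * b j (e s))"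
        by (rule syndrome_systematic_check[OF J e True])
      also have "\<dots> = \<sigma> s"
        using \<open>the_inv_into {0..<r} e (e s) = s\<close> bij_betw_apply[OF e] True by (simp add: v_def)
      finally show ?thesis .
    next
      case False
      then show ?thesis using \<sigma> by (simp add: syndrome_def words_def)
    qed
    ultimately show "\<sigma> \<in> syndrome r {1..n} (systematic_check e J b) ` words {1..n}"
      by (metis ext image_eqI)
  qed
qed (rule image_subsetI, rule syndrome_in_words)

lemma linear_code_parity_check:
  fixes C :: "(nat \<Rightarrow> 'a::{finite,field}) set"
  assumes lin: "linear_code n C" and dim: "card C = CARD('a) ^ k"
  obtains H where "C = parity_check (n - k) {1..n} H"
    and "syndrome (n - k) {1..n} H ` words {1..n} = words {0..<n - k}"
proof -
  obtain J where J: "J \<subseteq> {1..n}" "information_set C J"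
    using linear_code_information_set[OF lin] by blast
  have finJ: "finite J" using J(1) by (rule finite_subset) simp
  have "CARD('a) ^ card J = CARD('a) ^ k" using card_information_set[OF lin J] dim by simp
  then have "card ({1..n} - J) = n - k"
    using card_field_ge_2[where 'a='a] J(1) finJ by (simp add: card_Diff_subset)
  then obtain e where e: "bij_betw e {0..<n - k} ({1..n} - J)"
    by (metis ex_bij_betw_nat_finite finite_Diff finite_atLeastAtMost)
  obtain b where "\<And>j. b j \<in> C" "\<And>v. v \<in> C \<Longrightarrow> v = (\<lambda>i. \<Sum>j\<in>J. v j * b j i)"
    "\<And>v i. i \<in> J \<Longrightarrow> (\<Sum>j\<in>J. v j * b j i) = v i"
    using information_set_encoder[OF lin finJ J(2)] by blast
  from parity_check_systematic_check[OF lin J(1) this e] syndrome_systematic_check_onto[OF J(1) e]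
  show thesis by (rule that)
qed

section \<open>Words at distance one\<close>

lemma syndrome_fun_upd_eq_zero_iff:
  assumes "finite S" "i \<in> S"
  shows "syndrome r S H (v(i := v i - a)) = (\<lambda>_. 0) \<longleftrightarrow>
    syndrome r S H ((\<lambda>_. 0)(i := a)) = syndrome r S H v"
proof -
  have diff: "syndrome r S H (v(i := v i - a)) s =
      syndrome r S H v s - syndrome r S H ((\<lambda>_. 0)(i := a)) s" for s
    using syndrome_fun_upd[OF assms, of r H v "v i - a" s]
      syndrome_fun_upd[OF assms, of r H "\<lambda>_. 0" a s]
    by (cases "s < r") (simp_all add: syndrome_zero)
  have "syndrome r S H (v(i := v i - a)) = (\<lambda>_. 0) \<longleftrightarrow>
      (\<forall>s. syndrome r S H v s = syndrome r S H ((\<lambda>_. 0)(i := a)) s)"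
    by (simp add: fun_eq_iff diff)
  also have "\<dots> \<longleftrightarrow> syndrome r S H ((\<lambda>_. 0)(i := a)) = syndrome r S H v"
    by (metis ext)
  finally show ?thesis .
qed

lemma distance_one_parity_check_iff:
  assumes S: "finite S" and v: "v \<in> words S"
  shows "c \<in> parity_check r S H \<and> hdist v c = 1 \<longleftrightarrow>
    (\<exists>i a. i \<in> S \<and> a \<noteq> 0 \<and> syndrome r S H ((\<lambda>_. 0)(i := a)) = syndrome r S H v \<and>
      c = v(i := v i - a))"
proof
  assume c: "c \<in> parity_check r S H \<and> hdist v c = 1"
  then obtain i b where b: "b \<noteq> v i" "c = v(i := b)" unfolding hdist_eq_1_iff by blast
  have "i \<in> S"
  proof (rule ccontr)
    assume "i \<notin> S"
    moreover have "c \<in> words S" using c by (simp add: parity_check_def)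
    ultimately have "c i = 0" by (simp add: words_def)
    then show False using b v \<open>i \<notin> S\<close> by (simp add: words_def)
  qed
  moreover have "syndrome r S H ((\<lambda>_. 0)(i := v i - b)) = syndrome r S H v"
    using c b syndrome_fun_upd_eq_zero_iff[OF S \<open>i \<in> S\<close>, of r H v "v i - b"]
    by (simp add: parity_check_iff_syndrome)
  ultimately show "\<exists>i a. i \<in> S \<and> a \<noteq> 0 \<and> syndrome r S H ((\<lambda>_. 0)(i := a)) = syndrome r S H v \<and>
      c = v(i := v i - a)"
    using b by (intro exI[of _ i] exI[of _ "v i - b"]) simp
next
  assume "\<exists>i a. i \<in> S \<and> a \<noteq> 0 \<and> syndrome r S H ((\<lambda>_. 0)(i := a)) = syndrome r S H v \<and>
      c = v(i := v i - a)"
  then obtain i a where i: "i \<in> S" "a \<noteq> 0"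
    and a: "syndrome r S H ((\<lambda>_. 0)(i := a)) = syndrome r S H v" and c: "c = v(i := v i - a)"
    by blast
  have "c \<in> words S" using v i by (auto simp: c words_def)
  then have "c \<in> parity_check r S H"
    using a syndrome_fun_upd_eq_zero_iff[OF S i(1), of r H v a] by (simp add: parity_check_iff_syndrome c)
  moreover have "hdist v c = 1" unfolding hdist_eq_1_iff c using i(2) by force
  ultimately show "c \<in> parity_check r S H \<and> hdist v c = 1" ..
qed

lemma card_distance_one_parity_check:
  fixes H :: "nat \<Rightarrow> nat \<Rightarrow> 'a::comm_ring_1"
  assumes S: "finite S" and v: "v \<in> words S"
  shows "card {c \<in> parity_check r S H. hdist v c = 1} =
    card {(i, a) \<in> S \<times> (UNIV - {0}). syndrome r S H ((\<lambda>_. 0)(i := a)) = syndrome r S H v}"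
    (is "card ?B = card ?P")
proof -
  define \<psi> where "\<psi> = (\<lambda>(i, a). v(i := v i - a))"
  have "inj_on \<psi> ?P"
  proof (rule inj_onI)
    fix p p' assume pp: "p \<in> ?P" "p' \<in> ?P" "\<psi> p = \<psi> p'"
    obtain i a i' a' where p: "p = (i, a)" "p' = (i', a')" by fastforce
    have "a \<noteq> 0" using pp(1) p(1) by simp
    have eq: "v(i := v i - a) = v(i' := v i' - a')" using pp(3) p by (simp add: \<psi>_def)
    have "i = i'"
    proof (rule ccontr)
      assume "i \<noteq> i'"
      then have "v i - a = v i" using fun_cong[OF eq, of i] by simp
      then show False using \<open>a \<noteq> 0\<close> by simp
    qed
    then have "a = a'" using fun_cong[OF eq, of i] by simp
    then show "p = p'" using p \<open>i = i'\<close> by simp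
  qed
  moreover have "?B = \<psi> ` ?P"
    using distance_one_parity_check_iff[OF S v, of _ r H] by (auto simp: \<psi>_def image_iff)
  ultimately show ?thesis by (simp add: card_image)
qed

lemma card_coordinates_by_syndromes:
  fixes H :: "nat \<Rightarrow> nat \<Rightarrow> 'a::{finite,field}"
  assumes S: "finite S"
    and onto: "syndrome r S H ` words S = words {0..<r}"
    and min_wt: "\<And>c. c \<in> parity_check r S H \<Longrightarrow> c \<noteq> (\<lambda>_. 0) \<Longrightarrow> 2 \<le> wt c"
    and na: "\<And>v. v \<in> words S \<Longrightarrow> v \<notin> parity_check r S H \<Longrightarrow>
      card {c \<in> parity_check r S H. hdist v c = 1} = na"
  shows "card S * (CARD('a) - 1) = (CARD('a) ^ r - 1) * na"
proof -
  define P where "P = S \<times> (UNIV - {0::'a})"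
  define \<phi> where "\<phi> = (\<lambda>(i, a). syndrome r S H ((\<lambda>_. 0)(i := a)))"
  define Z where "Z = words {0..<r} - {\<lambda>_. 0::'a}"
  have "\<phi> ` P \<subseteq> Z"
  proof
    fix \<sigma> assume "\<sigma> \<in> \<phi> ` P"
    then obtain i a where i: "i \<in> S" "a \<noteq> 0" and \<sigma>: "\<sigma> = syndrome r S H ((\<lambda>_. 0)(i := a))"
      by (auto simp: P_def \<phi>_def)
    have "(\<lambda>_. 0)(i := a) \<in> words S" using i(1) by (simp add: words_def)
    then have "\<sigma> \<noteq> (\<lambda>_. 0)"
      using fun_upd_zero_notin_if_wt_ge_2[of "parity_check r S H", OF min_wt i(2)] \<sigma>
      by (simp add: parity_check_iff_syndrome)
    then show "\<sigma> \<in> Z" using \<sigma> syndrome_in_words by (simp add: Z_def)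
  qed
  then have "card P = (\<Sum>\<sigma>\<in>Z. card {p \<in> P. \<phi> p = \<sigma>})"
    using sum.group[of P Z \<phi> "\<lambda>_. 1::nat"] S by (simp add: P_def Z_def finite_words)
  also have "\<dots> = (\<Sum>\<sigma>\<in>Z. na)"
  proof (rule sum.cong)
    fix \<sigma> assume "\<sigma> \<in> Z"
    then have "\<sigma> \<in> syndrome r S H ` words S" "\<sigma> \<noteq> (\<lambda>_. 0)" using onto by (auto simp: Z_def)
    then obtain v where v: "v \<in> words S" "syndrome r S H v = \<sigma>" by blast
    then have "v \<notin> parity_check r S H" using \<open>\<sigma> \<noteq> (\<lambda>_. 0)\<close> by (simp add: parity_check_iff_syndrome)
    moreover have "{p \<in> P. \<phi> p = \<sigma>} =
        {(i, a) \<in> S \<times> (UNIV - {0}). syndrome r S H ((\<lambda>_. 0)(i := a)) = syndrome r S H v}"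
      by (auto simp: P_def \<phi>_def v(2))
    ultimately show "card {p \<in> P. \<phi> p = \<sigma>} = na"
      using card_distance_one_parity_check[OF S v(1)] na[OF v(1)] by simp
  qed simp
  also have "\<dots> = (CARD('a) ^ r - 1) * na" by (simp add: Z_def card_words_nonzero)
  finally show ?thesis by (simp add: P_def card_cartesian_product card_Diff_singleton)
qed

section \<open>Shortening to a transversal\<close>

lemma parity_check_column_nonzero:
  fixes H :: "nat \<Rightarrow> nat \<Rightarrow> 'a::comm_ring_1"
  assumes S: "finite S" "i \<in> S"
    and min_wt: "\<And>c. c \<in> parity_check r S H \<Longrightarrow> c \<noteq> (\<lambda>_. 0) \<Longrightarrow> 2 \<le> wt c"
  shows "\<exists>s<r. H s i \<noteq> 0"
proof (rule ccontr)
  assume "\<not> (\<exists>s<r. H s i \<noteq> 0)"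
  then have "syndrome r S H ((\<lambda>_. 0)(i := 1)) = (\<lambda>_. 0)"
    using syndrome_fun_upd[OF S, of r H "\<lambda>_. 0" 1] by (simp add: syndrome_zero fun_eq_iff)
  moreover have "(\<lambda>_. 0)(i := 1) \<in> words S" using S(2) by (simp add: words_def)
  ultimately have "(\<lambda>_. 0)(i := 1::'a) \<in> parity_check r S H" by (simp add: parity_check_iff_syndrome)
  then show False using fun_upd_zero_notin_if_wt_ge_2[of "parity_check r S H", OF min_wt] by simp
qed

lemma parity_check_columns_independent:
  fixes H :: "nat \<Rightarrow> nat \<Rightarrow> 'a::comm_ring_1"
  assumes S: "finite S" "j \<in> S" "j' \<in> S" "j \<noteq> j'"
    and min_wt: "\<And>c. c \<in> parity_check r S H \<Longrightarrow> c \<noteq> (\<lambda>_. 0) \<Longrightarrow> 2 \<le> wt c"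
    and no_pair: "\<And>c. c \<in> parity_check r S H \<Longrightarrow> supp c \<noteq> {j, j'}"
    and dep: "\<forall>s<r. a * H s j + b * H s j' = 0"
  shows "a = 0 \<and> b = 0"
proof -
  define u where "u = ((\<lambda>_. 0)(j := a))(j' := b)"
  have "syndrome r S H u s = (if s < r then a * H s j + b * H s j' else 0)" for s
    using syndrome_fun_upd[OF S(1,3), of r H "(\<lambda>_. 0)(j := a)" b s]
      syndrome_fun_upd[OF S(1,2), of r H "\<lambda>_. 0" a s] S(4)
    by (simp add: u_def syndrome_zero algebra_simps)
  then have "syndrome r S H u = (\<lambda>_. 0)" using dep by (simp add: fun_eq_iff)
  moreover have "u \<in> words S" using S(2,3) by (simp add: u_def words_def)
  ultimately have u: "u \<in> parity_check r S H" by (simp add: parity_check_iff_syndrome)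
  have supp_u: "supp u \<subseteq> {j, j'}" by (auto simp: u_def supp_def)
  show ?thesis
  proof (rule ccontr)
    assume "\<not> (a = 0 \<and> b = 0)"
    moreover have "u j = a" "u j' = b" using S(4) by (simp_all add: u_def)
    ultimately have "u \<noteq> (\<lambda>_. 0)" by auto
    then have "2 \<le> card (supp u)" using min_wt[OF u] by (simp add: wt_def)
    moreover have "card (supp u) \<le> card {j, j'}" using card_mono[OF _ supp_u] by simp
    ultimately have "card (supp u) = card {j, j'}" using S(4) by simp
    then have "supp u = {j, j'}" using card_subset_eq[OF _ supp_u] by simp
    then show False using no_pair[OF u] by blast
  qed
qed

lemma parity_check_shorten:
  assumes "I \<subseteq> S" "finite S"
  shows "{c \<in> parity_check r S H. supp c \<subseteq> I} = parity_check r I H"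
proof (intro set_eqI)
  fix v :: "nat \<Rightarrow> 'a"
  have words_iff: "v \<in> words S \<and> supp v \<subseteq> I \<longleftrightarrow> v \<in> words I"
    using assms(1) by (auto simp: words_def supp_def)
  show "v \<in> {c \<in> parity_check r S H. supp c \<subseteq> I} \<longleftrightarrow> v \<in> parity_check r I H"
  proof (cases "v \<in> words I")
    case True
    then have "(\<Sum>t\<in>S. H s t * v t) = (\<Sum>t\<in>I. H s t * v t)" for s
      using assms by (intro sum.mono_neutral_right) (auto simp: words_def)
    then show ?thesis using True words_iff by (simp add: parity_check_def)
  next
    case False
    then show ?thesis using words_iff by (auto simp: parity_check_def)
  qed
qed

lemma hamming_code_shortened_parity_check:
  fixes H :: "nat \<Rightarrow> nat \<Rightarrow> 'a::{finite,field}"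
  assumes I: "I \<subseteq> S" "finite S" and r: "2 \<le> r"
    and card_I: "card I * (CARD('a) - 1) = CARD('a) ^ r - 1"
    and min_wt: "\<And>c. c \<in> parity_check r S H \<Longrightarrow> c \<noteq> (\<lambda>_. 0) \<Longrightarrow> 2 \<le> wt c"
    and no_pair: "\<And>c j j'. c \<in> parity_check r S H \<Longrightarrow> j \<in> I \<Longrightarrow> j' \<in> I \<Longrightarrow> j \<noteq> j' \<Longrightarrow>
      supp c \<noteq> {j, j'}"
  shows "hamming_code I {c \<in> parity_check r S H. supp c \<subseteq> I}"
proof -
  have fin: "finite I" using I by (rule finite_subset)
  have card: "card I = (CARD('a) ^ r - 1) div (CARD('a) - 1)"
    unfolding card_I[symmetric] using card_field_ge_2[where 'a='a] by simp
  have cols: "\<forall>j\<in>I. \<exists>s<r. H s j \<noteq> 0"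
    using parity_check_column_nonzero[OF I(2) _ min_wt] I(1) by blast
  have indep: "\<forall>j\<in>I. \<forall>j'\<in>I. j \<noteq> j' \<longrightarrow>
      (\<forall>a b. (\<forall>s<r. a * H s j + b * H s j' = 0) \<longrightarrow> a = 0 \<and> b = 0)"
  proof (intro ballI impI allI)
    fix j j' a b assume jj: "j \<in> I" "j' \<in> I" "j \<noteq> j'" and dep: "\<forall>s<r. a * H s j + b * H s j' = 0"
    show "a = 0 \<and> b = 0"
      using parity_check_columns_independent[OF I(2) _ _ jj(3) min_wt no_pair[OF _ jj] dep] jj I(1)
      by blast
  qed
  have D: "{c \<in> parity_check r S H. supp c \<subseteq> I} = {v \<in> words I. \<forall>s<r. (\<Sum>t\<in>I. H s t * v t) = 0}"
    using parity_check_shorten[OF I] by (simp add: parity_check_def)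
  show ?thesis
    unfolding hamming_code_def by (intro conjI exI[of _ r] exI[of _ H] fin r card cols indep D)
qed

lemma hamming_length_ge:
  fixes q r m :: nat
  assumes "2 \<le> q" "2 \<le> r" "m * (q - 1) = q ^ r - 1"
  shows "q + 1 \<le> m"
proof (rule ccontr)
  assume "\<not> q + 1 \<le> m"
  then have "m * (q - 1) \<le> q * (q - 1)" by simp
  also have "\<dots> = q * q - q" by (simp add: diff_mult_distrib2)
  also have "\<dots> < q * q - 1"
  proof -
    have "2 * q \<le> q * q" using assms(1) by simp
    then show ?thesis using assms(1) by linarith
  qed
  also have "\<dots> \<le> q ^ r - 1" using power_increasing[of 2 r q] assms(1,2) by (simp add: power2_eq_square)
  finally show False using assms(3) by simp
qed

lemma inj_on_transversal:
  assumes disj: "\<forall>l\<in>L. \<forall>l'\<in>L. l \<noteq> l' \<longrightarrow> X l \<inter> X l' = {}"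
    and rep: "\<forall>l\<in>L. ii l \<in> X l"
  shows "inj_on ii L"
proof (rule inj_onI)
  fix l l' assume "l \<in> L" "l' \<in> L" "ii l = ii l'"
  then have "ii l \<in> X l \<inter> X l'" using rep by auto
  then show "l = l'" using disj \<open>l \<in> L\<close> \<open>l' \<in> L\<close> by blast
qed

lemma transversal_supp_ne_pair:
  assumes disj: "\<forall>l\<in>L. \<forall>l'\<in>L. l \<noteq> l' \<longrightarrow> X l \<inter> X l' = {}"
    and rep: "\<forall>l\<in>L. ii l \<in> X l"
    and w2: "\<forall>c\<in>C. wt c = 2 \<longrightarrow> (\<exists>l\<in>L. supp c \<subseteq> X l)"
    and "c \<in> C" "j \<in> ii ` L" "j' \<in> ii ` L" "j \<noteq> j'"
  shows "supp c \<noteq> {j, j'}"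
proof
  assume supp: "supp c = {j, j'}"
  then have "wt c = 2" using \<open>j \<noteq> j'\<close> by (simp add: wt_def)
  then obtain l where l: "l \<in> L" "j \<in> X l" "j' \<in> X l" using w2 \<open>c \<in> C\<close> supp by auto
  obtain l1 l2 where "l1 \<in> L" "l2 \<in> L" "j = ii l1" "j' = ii l2" using assms(5,6) by blast
  then have "l1 = l" "l2 = l" using l rep disj by blast+
  then show False using \<open>j = ii l1\<close> \<open>j' = ii l2\<close> \<open>j \<noteq> j'\<close> by simp
qed

theorem proposition3p9:
  fixes C :: "(nat \<Rightarrow> 'a::{finite,field}) set"
    and n k na m :: nat
    and X :: "nat \<Rightarrow> nat set"
    and ii :: "nat \<Rightarrow> nat"
  assumes lin: "linear_code n C"
    and dim: "card C = CARD('a) ^ k"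
    and md: "min_dist_eq C 2"
    and cr: "completely_regular n C"
    and rho: "covering_radius n C = 1"
    and kn: "k < n - 1"
    and na: "\<forall>v \<in> words {1..n} - C. card {c\<in>C. hdist v c = 1} = na"
    and nm: "n = m * na"
    and Xsub: "\<forall>j\<in>{1..m}. X j \<subseteq> {1..n} \<and> card (X j) = na"
    and Xdisj: "\<forall>j\<in>{1..m}. \<forall>j'\<in>{1..m}. j \<noteq> j' \<longrightarrow> X j \<inter> X j' = {}"
    and Xcov: "(\<Union>j\<in>{1..m}. X j) = {1..n}"
    and w2: "\<forall>c\<in>C. wt c = 2 \<longrightarrow> (\<exists>j\<in>{1..m}. supp c \<subseteq> X j)"
    and ii: "\<forall>j\<in>{1..m}. ii j \<in> X j"
  shows "m \<ge> 3 \<and> card (ii ` {1..m}) = m \<and>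
         hamming_code (ii ` {1..m}) {c \<in> C. supp c \<subseteq> ii ` {1..m}}"
proof -
  define q r where "q = CARD('a)" and "r = n - k"
  obtain H where C_eq: "C = parity_check r {1..n} H"
    and onto: "syndrome r {1..n} H ` words {1..n} = words {0..<r}"
    using linear_code_parity_check[OF lin dim] unfolding r_def by blast
  have r: "2 \<le> r" using kn by (simp add: r_def)
  have min_wt: "2 \<le> wt c" if "c \<in> parity_check r {1..n} H" "c \<noteq> (\<lambda>_. 0)" for c
    using min_dist_eq_le_wt[OF md linear_code_zero[OF lin]] that unfolding C_eq .
  have "n * (q - 1) = (q ^ r - 1) * na"
    using card_coordinates_by_syndromes[OF _ onto min_wt] na unfolding q_def C_eq by simp
  then have mq: "m * (q - 1) = q ^ r - 1" using nm kn by (cases "na = 0") auto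
  have card_I: "card (ii ` {1..m}) = m" using inj_on_transversal[OF Xdisj ii] by (simp add: card_image)
  have "hamming_code (ii ` {1..m}) {c \<in> C. supp c \<subseteq> ii ` {1..m}}"
    unfolding C_eq
  proof (rule hamming_code_shortened_parity_check[OF _ _ r _ min_wt])
    show "ii ` {1..m} \<subseteq> {1..n}" using ii Xsub by auto
    show "card (ii ` {1..m}) * (CARD('a) - 1) = CARD('a) ^ r - 1" using card_I mq by (simp add: q_def)
    show "supp c \<noteq> {j, j'}"
      if "c \<in> parity_check r {1..n} H" "j \<in> ii ` {1..m}" "j' \<in> ii ` {1..m}" "j \<noteq> j'" for c j j'
      using transversal_supp_ne_pair[OF Xdisj ii w2 that(1)[folded C_eq] that(2-4)] .
  qed simp
  moreover have "3 \<le> m"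
    using hamming_length_ge[OF card_field_ge_2 r mq[unfolded q_def]] card_field_ge_2[where 'a='a] by simp
  ultimately show ?thesis using card_I by simp
qed

end
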